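(* Let $c_1,\dots,c_r\in K^\times$. For $1\le s\le r$ let $f_s=(\tau+c_s)(\tau+c_{s-1})\cdots(\tau+c_1)\in K\{\tau\}$ and $W_s=\{\lambda\in K^{\rm sep}: f_s(\lambda)=0\}$. Then $0=W_0\subset W_1\subset\cdots\subset W_r$ are $G_K$-stable $\mathbb{F}_q$-subspaces with $\dim W_s=s$, and the representation $\bar\rho:G_K\to\mathrm{GL}_{\mathbb{F}_q}(W_r)\cong\mathrm{GL}_r(\mathbb{F}_q)$ is isomorphic to an upper triangular representation with diagonal characters $\kappa_{(-c_1)},\kappa_{(-c_2)},\dots,\kappa_{(-c_r)}$.
   Context: $p$ prime, $q$ a power of $p$, $F=\mathbb{F}_q(t)$, $K$ a finite extension of $F$. $K\{\tau\}$ is the twisted polynomial ring with $\tau c=c^q\tau$, acting on $K^{\rm sep}$ with $\tau$ the $q$-th power map. For $c\in K^\times$, $\kappa_{(c)}:G_K\to\mathbb{F}_q^\times$ is the Kummer character $\sigma\mapsto\sigma(\lambda)/\lambda$ for any $\lambda\in K^{\rm sep}$ with $\lambda^{q-1}=c$ (i.e. the character corresponding to the class of $c$ under $K^\times/(K^\times)^{q-1}\cong\mathrm{Hom}(G_K,\mathbb{F}_q^\times)$). *)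

theory Defs
  imports "HOL-Computational_Algebra.Polynomial"
begin

text \<open>Ambient algebraically closed field (type 'a); all fields below are subfields of it.\<close>

definition alg_closed :: "'a::field itself \<Rightarrow> bool" where
  "alg_closed _ \<longleftrightarrow> (\<forall>f::'a poly. degree f > 0 \<longrightarrow> (\<exists>x. poly f x = 0))"

definition is_subfield :: "'a::field set \<Rightarrow> bool" where
  "is_subfield S \<longleftrightarrow> 0 \<in> S \<and> 1 \<in> S \<and>
     (\<forall>x\<in>S. \<forall>y\<in>S. x + y \<in> S \<and> x * y \<in> S) \<and> (\<forall>x\<in>S. - x \<in> S) \<and>
     (\<forall>x\<in>S. x \<noteq> 0 \<longrightarrow> inverse x \<in> S)"

definition poly_over :: "'a::field set \<Rightarrow> 'a poly \<Rightarrow> bool" where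
  "poly_over S f \<longleftrightarrow> (\<forall>i. coeff f i \<in> S)"

definition transcendental_over :: "'a::field set \<Rightarrow> 'a \<Rightarrow> bool" where
  "transcendental_over S t \<longleftrightarrow> (\<forall>f. poly_over S f \<and> poly f t = 0 \<longrightarrow> f = 0)"

definition rat_fun_field :: "'a::field set \<Rightarrow> 'a \<Rightarrow> 'a set" where
  "rat_fun_field S t = {poly a t / poly b t | a b. poly_over S a \<and> poly_over S b \<and> poly b t \<noteq> 0}"

definition lin_comb :: "'a::field set \<Rightarrow> 'a set \<Rightarrow> 'a set" where
  "lin_comb F B = {\<Sum>b\<in>B. a b * b | a. \<forall>b\<in>B. a b \<in> F}"

definition lin_indep :: "'a::field set \<Rightarrow> 'a set \<Rightarrow> bool" where
  "lin_indep F B \<longleftrightarrow> (\<forall>a. (\<forall>b\<in>B. a b \<in> F) \<and> (\<Sum>b\<in>B. a b * b) = 0 \<longrightarrow> (\<forall>b\<in>B. a b = 0))"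

definition is_basis :: "'a::field set \<Rightarrow> 'a set \<Rightarrow> 'a set \<Rightarrow> bool" where
  "is_basis F W B \<longleftrightarrow> finite B \<and> B \<subseteq> W \<and> lin_indep F B \<and> W = lin_comb F B"

definition is_subspace :: "'a::field set \<Rightarrow> 'a set \<Rightarrow> bool" where
  "is_subspace F W \<longleftrightarrow> 0 \<in> W \<and> (\<forall>x\<in>W. \<forall>y\<in>W. x + y \<in> W) \<and> (\<forall>a\<in>F. \<forall>x\<in>W. a * x \<in> W)"

definition has_dim :: "'a::field set \<Rightarrow> 'a set \<Rightarrow> nat \<Rightarrow> bool" where
  "has_dim F W n \<longleftrightarrow> (\<exists>B. is_basis F W B \<and> card B = n)"

definition finite_ext :: "'a::field set \<Rightarrow> 'a set \<Rightarrow> bool" where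
  "finite_ext F K \<longleftrightarrow> (\<exists>B. is_basis F K B)"

definition sep_closure :: "'a::field set \<Rightarrow> 'a set" where
  "sep_closure K = {x. \<exists>f. f \<noteq> 0 \<and> poly_over K f \<and> poly f x = 0 \<and>
                        (\<forall>y. poly f y = 0 \<longrightarrow> poly (pderiv f) y \<noteq> 0)}"

text \<open>Absolute Galois group G_K = Aut(K^sep / K); automorphisms are normalised
  to be the identity outside K^sep.\<close>
definition abs_galois :: "'a::field set \<Rightarrow> ('a \<Rightarrow> 'a) set" where
  "abs_galois K = {\<sigma>. bij_betw \<sigma> (sep_closure K) (sep_closure K) \<and>
      (\<forall>x\<in>sep_closure K. \<forall>y\<in>sep_closure K. \<sigma> (x + y) = \<sigma> x + \<sigma> y \<and> \<sigma> (x * y) = \<sigma> x * \<sigma> y) \<and>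
      (\<forall>x\<in>K. \<sigma> x = x) \<and> (\<forall>x. x \<notin> sep_closure K \<longrightarrow> \<sigma> x = x)}"

definition kummer :: "nat \<Rightarrow> 'a::field set \<Rightarrow> 'a \<Rightarrow> ('a \<Rightarrow> 'a) \<Rightarrow> 'a" where
  "kummer q K c \<sigma> = (let l = (SOME l. l \<in> sep_closure K \<and> l ^ (q - 1) = c) in \<sigma> l / l)"

text \<open>Twisted polynomials K{tau}: coefficient lists [a0, a1, ...] for sum a_i tau^i,
  with tau * b = b^q * tau.\<close>
definition tcoeff :: "'a::field list \<Rightarrow> nat \<Rightarrow> 'a" where
  "tcoeff a i = (if i < length a then a ! i else 0)"

definition tmul :: "nat \<Rightarrow> 'a::field list \<Rightarrow> 'a list \<Rightarrow> 'a list" where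
  "tmul q a b = map (\<lambda>k. \<Sum>i\<le>k. tcoeff a i * (tcoeff b (k - i)) ^ (q ^ i))
                    [0..<length a + length b - 1]"

definition teval :: "nat \<Rightarrow> 'a::field list \<Rightarrow> 'a \<Rightarrow> 'a" where
  "teval q a x = (\<Sum>i<length a. a ! i * x ^ (q ^ i))"

fun fpoly :: "nat \<Rightarrow> (nat \<Rightarrow> 'a::field) \<Rightarrow> nat \<Rightarrow> 'a list" where
  "fpoly q c 0 = [1]"
| "fpoly q c (Suc s) = tmul q [c (Suc s), 1] (fpoly q c s)"

definition Wsp :: "nat \<Rightarrow> 'a::field set \<Rightarrow> (nat \<Rightarrow> 'a) \<Rightarrow> nat \<Rightarrow> 'a set" where
  "Wsp q K c s = {l \<in> sep_closure K. teval q (fpoly q c s) l = 0}"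

end

theory Submission
  imports Defs "HOL-Computational_Algebra.Primes"
begin

text \<open>
  Since \<open>\<tau>\<close> is additive and fixes \<open>\<bbbF>\<^sub>q\<close>, each \<open>x \<mapsto> f\<^sub>s(x)\<close> is \<open>\<bbbF>\<^sub>q\<close>-linear. Pick \<open>\<mu>\<^sub>j\<close> with
  \<open>\<mu>\<^sub>j\<^bsup>q-1\<^esup> = -c\<^sub>j\<close> and \<open>w\<^sub>j\<close> with \<open>f\<^bsub>j-1\<^esub>(w\<^sub>j) = \<mu>\<^sub>j\<close>. The kernel of \<open>\<tau> + c\<^sub>j\<close> is the line
  \<open>\<bbbF>\<^sub>q \<mu>\<^sub>j\<close>, so by induction on \<open>s\<close> the roots of \<open>f\<^sub>s\<close> form the \<open>\<bbbF>\<^sub>q\<close>-space with basis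
  \<open>w\<^sub>1, \<dots>, w\<^sub>s\<close>. As an ordinary polynomial \<open>f\<^sub>s\<close> has nowhere vanishing derivative, so all
  these roots lie in \<open>K\<^sup>s\<^sup>e\<^sup>p\<close>. A Galois automorphism \<open>\<sigma>\<close> commutes with \<open>f\<^bsub>j-1\<^esub>\<close>, hence
  \<open>f\<^bsub>j-1\<^esub>(\<sigma> w\<^sub>j) = \<sigma> \<mu>\<^sub>j = \<kappa>(\<sigma>) \<mu>\<^sub>j\<close> with \<open>\<kappa> = \<kappa>\<^bsub>(-c\<^sub>j)\<^esub>\<close>, that is
  \<open>\<sigma> w\<^sub>j - \<kappa>(\<sigma>) w\<^sub>j \<in> W\<^bsub>j-1\<^esub>\<close>. Commuting \<open>\<sigma>\<close> with polynomials over \<open>K\<close> needs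
  \<open>K\<^sup>s\<^sup>e\<^sup>p\<close> to be closed under them, which is proved by descending a polynomial relation
  from the ambient field to \<open>K\<close> with linear algebra.
\<close>

section \<open>Frobenius\<close>

lemma add_power_prime_eq:
  fixes x y :: "'a::comm_ring_1"
  assumes "prime p" "of_nat p = (0::'a)"
  shows "(x + y) ^ p = x ^ p + y ^ p"
proof -
  have p0: "p > 0" using assms prime_gt_0_nat by blast
  have "(x + y) ^ p = (\<Sum>k\<le>p. of_nat (p choose k) * x ^ k * y ^ (p - k))"
    by (rule binomial_ring)
  also have "\<dots> = (\<Sum>k\<in>{0,p}. of_nat (p choose k) * x ^ k * y ^ (p - k))"
  proof (rule sum.mono_neutral_right)
    show "\<forall>i\<in>{..p} - {0, p}. of_nat (p choose i) * x ^ i * y ^ (p - i) = 0"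
    proof
      fix i assume "i \<in> {..p} - {0, p}"
      then have "p dvd (p choose i)" using dvd_choose_prime[of i p] assms p0 by auto
      then obtain m where "p choose i = p * m" by blast
      then have "of_nat (p choose i) = (0::'a)" using assms by simp
      then show "of_nat (p choose i) * x ^ i * y ^ (p - i) = 0" by simp
    qed
  qed auto
  also have "\<dots> = x ^ p + y ^ p" using p0 by simp
  finally show ?thesis .
qed

lemma add_power_prime_power_eq:
  fixes x y :: "'a::comm_ring_1"
  assumes "prime p" "of_nat p = (0::'a)"
  shows "(x + y) ^ (p ^ n) = x ^ (p ^ n) + y ^ (p ^ n)"
proof (induction n)
  case (Suc n)
  have "(x + y) ^ (p ^ Suc n) = ((x + y) ^ (p ^ n)) ^ p"
    by (simp add: power_mult[symmetric] mult.commute)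
  also have "\<dots> = (x ^ (p ^ n)) ^ p + (y ^ (p ^ n)) ^ p"
    using Suc add_power_prime_eq[OF assms] by simp
  also have "\<dots> = x ^ (p ^ Suc n) + y ^ (p ^ Suc n)"
    by (simp add: power_mult[symmetric] mult.commute)
  finally show ?case .
qed simp

lemma power_sum_eq_sum_power:
  fixes g :: "'b \<Rightarrow> 'a::comm_ring_1"
  assumes "\<And>x y. (x + y) ^ q = x ^ q + (y::'a) ^ q" "q > 0" "finite A"
  shows "(\<Sum>i\<in>A. g i) ^ q = (\<Sum>i\<in>A. g i ^ q)"
  using assms(3) by (induction A rule: finite_induct) (simp_all add: assms(1,2) zero_power)

lemma subfield_closed:
  assumes "is_subfield K"
  shows subfield_0: "0 \<in> K"
    and subfield_1: "1 \<in> K"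
    and subfield_add: "x \<in> K \<Longrightarrow> y \<in> K \<Longrightarrow> x + y \<in> K"
    and subfield_mult: "x \<in> K \<Longrightarrow> y \<in> K \<Longrightarrow> x * y \<in> K"
    and subfield_uminus: "x \<in> K \<Longrightarrow> - x \<in> K"
    and subfield_diff: "x \<in> K \<Longrightarrow> y \<in> K \<Longrightarrow> x - y \<in> K"
    and subfield_inverse: "x \<in> K \<Longrightarrow> inverse x \<in> K"
    and subfield_divide: "x \<in> K \<Longrightarrow> y \<in> K \<Longrightarrow> x / y \<in> K"
proof -
  have zero: "0 \<in> K" and one: "1 \<in> K" and add: "\<And>x y. x \<in> K \<Longrightarrow> y \<in> K \<Longrightarrow> x + y \<in> K"
    and mult: "\<And>x y. x \<in> K \<Longrightarrow> y \<in> K \<Longrightarrow> x * y \<in> K"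
    and neg: "\<And>x. x \<in> K \<Longrightarrow> - x \<in> K"
    and inv_nonzero: "\<And>x. x \<in> K \<Longrightarrow> x \<noteq> 0 \<Longrightarrow> inverse x \<in> K"
    using assms unfolding is_subfield_def by blast+
  show "0 \<in> K" "1 \<in> K" by (fact zero, fact one)
  show "x \<in> K \<Longrightarrow> y \<in> K \<Longrightarrow> x + y \<in> K" "x \<in> K \<Longrightarrow> y \<in> K \<Longrightarrow> x * y \<in> K"
     "x \<in> K \<Longrightarrow> - x \<in> K" by (fact add, fact mult, fact neg)
  show "x \<in> K \<Longrightarrow> y \<in> K \<Longrightarrow> x - y \<in> K" using add neg by (metis diff_conv_add_uminus)
  have inv: "x \<in> K \<Longrightarrow> inverse x \<in> K" for x
    using inv_nonzero zero by (cases "x = 0") simp_all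
  show "x \<in> K \<Longrightarrow> inverse x \<in> K" by (rule inv)
  show "x \<in> K \<Longrightarrow> y \<in> K \<Longrightarrow> x / y \<in> K" using mult inv[of y] by (simp add: divide_inverse)
qed

lemma subfield_sum:
  assumes "is_subfield K" "\<forall>i\<in>A. f i \<in> K"
  shows "sum f A \<in> K"
proof (cases "finite A")
  case True
  then show ?thesis using assms(2)
  proof (induction A rule: finite_induct)
    case (insert x F)
    then show ?case using subfield_add[OF assms(1)] by simp
  qed (simp add: subfield_0[OF assms(1)])
qed (simp add: subfield_0[OF assms(1)])

lemma poly_over_pCons:
  "poly_over K (pCons a p) \<longleftrightarrow> a \<in> K \<and> poly_over K p"
  unfolding poly_over_def by (metis coeff_pCons_0 coeff_pCons_Suc not0_implies_Suc)

lemma poly_over_closed: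
  assumes "is_subfield K"
  shows poly_over_0: "poly_over K 0"
    and poly_over_1: "poly_over K 1"
    and poly_over_uminus: "poly_over K p \<Longrightarrow> poly_over K (- p)"
    and poly_over_add: "poly_over K p \<Longrightarrow> poly_over K q \<Longrightarrow> poly_over K (p + q)"
    and poly_over_mult: "poly_over K p \<Longrightarrow> poly_over K q \<Longrightarrow> poly_over K (p * q)"
    and poly_over_smult: "a \<in> K \<Longrightarrow> poly_over K p \<Longrightarrow> poly_over K (smult a p)"
    and poly_over_monom: "a \<in> K \<Longrightarrow> poly_over K (monom a n)"
  using subfield_closed[OF assms]
  by (auto simp: poly_over_def coeff_monom coeff_mult intro!: subfield_sum[OF assms])

lemma poly_over_power:
  assumes "is_subfield K" "poly_over K p"
  shows "poly_over K (p ^ n)"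
  by (induction n) (simp_all add: poly_over_1[OF assms(1)] poly_over_mult[OF assms(1) assms(2)])

section \<open>Descent of linear relations to a subfield\<close>

lemma solution_pivot_elim:
  fixes M :: "'b \<Rightarrow> nat \<Rightarrow> 'a::field"
  assumes i0: "i0 \<in> I" "M i0 N \<noteq> 0"
  shows "(\<forall>i\<in>I. (\<Sum>j<Suc N. M i j * v j) = 0) \<longleftrightarrow>
    (\<forall>i\<in>I. (\<Sum>j<N. (M i j - M i N * M i0 j / M i0 N) * v j) = 0)
      \<and> v N = - (\<Sum>j<N. M i0 j * v j) / M i0 N"
proof -
  define S where "S i = (\<Sum>j<N. M i j * v j)" for i
  have split: "(\<Sum>j<N. (M i j - M i N * M i0 j / M i0 N) * v j) = S i - M i N / M i0 N * S i0" for i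
    unfolding S_def by (simp add: sum_subtractf sum_distrib_left algebra_simps)
  have row0: "S i0 + M i0 N * v N = 0 \<longleftrightarrow> v N = - S i0 / M i0 N"
    using i0(2) by (auto simp: field_simps add_eq_0_iff2 minus_equation_iff[of "v N"])
  have rows: "S i + M i N * v N = S i - M i N / M i0 N * S i0"
    if "v N = - S i0 / M i0 N" for i
    unfolding that by (simp add: algebra_simps)
  have "(\<forall>i\<in>I. S i + M i N * v N = 0) \<longleftrightarrow>
      (\<forall>i\<in>I. S i - M i N / M i0 N * S i0 = 0) \<and> v N = - S i0 / M i0 N"
    using i0(1) row0 rows by auto
  then show ?thesis by (simp only: sum.lessThan_Suc split flip: S_def)
qed

lemma subfield_linear_descent:
  fixes M :: "'b \<Rightarrow> nat \<Rightarrow> 'a::field"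
  assumes K: "is_subfield K" and M: "\<forall>i j. M i j \<in> K"
    and v: "\<exists>j<N. v j \<noteq> 0" "\<forall>i\<in>I. (\<Sum>j<N. M i j * v j) = 0"
  shows "\<exists>w. (\<forall>j. w j \<in> K) \<and> (\<exists>j<N. w j \<noteq> 0) \<and> (\<forall>i\<in>I. (\<Sum>j<N. M i j * w j) = 0)"
  using M v
proof (induction N arbitrary: M v)
  case (Suc N)
  show ?case
  proof (cases "\<exists>i0\<in>I. M i0 N \<noteq> 0")
    case True
    then obtain i0 where i0: "i0 \<in> I" "M i0 N \<noteq> 0" by blast
    define M' where "M' i j = M i j - M i N * M i0 j / M i0 N" for i j
    note elim = solution_pivot_elim[of i0 I M N, OF i0, folded M'_def]
    have M'K: "\<forall>i j. M' i j \<in> K"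
      unfolding M'_def using Suc.prems(1) by (simp add: subfield_closed[OF K])
    have v_low: "\<exists>j<N. v j \<noteq> 0"
    proof (rule ccontr)
      assume "\<not> ?thesis"
      then have "v N = 0" using Suc.prems(3) unfolding elim by simp
      with \<open>\<not> ?thesis\<close> Suc.prems(2) show False by (auto simp: less_Suc_eq)
    qed
    have "\<forall>i\<in>I. (\<Sum>j<N. M' i j * v j) = 0" using Suc.prems(3) unfolding elim by blast
    then obtain w where w: "\<forall>j. w j \<in> K" "\<exists>j<N. w j \<noteq> 0"
      "\<forall>i\<in>I. (\<Sum>j<N. M' i j * w j) = 0"
      using Suc.IH[OF M'K v_low] by blast
    define w' where "w' = w(N := - (\<Sum>j<N. M i0 j * w j) / M i0 N)"
    have "\<forall>i\<in>I. (\<Sum>j<Suc N. M i j * w' j) = 0"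
      unfolding elim using w(3) by (simp add: w'_def)
    moreover have "\<forall>j. w' j \<in> K"
      unfolding w'_def using w(1) Suc.prems(1)
      by (simp add: subfield_closed[OF K] subfield_sum[OF K])
    moreover have "\<exists>j<Suc N. w' j \<noteq> 0" using w(2) unfolding w'_def by force
    ultimately show ?thesis by blast
  next
    case False
    then have "\<forall>i\<in>I. (\<Sum>j<Suc N. M i j * (if j = N then 1 else 0)) = 0" by simp
    then show ?thesis using subfield_closed[OF K] by (intro exI[of _ "\<lambda>j. if j = N then 1 else 0"]) auto
  qed
qed simp

lemma poly_over_linear_descent:
  fixes g :: "nat \<Rightarrow> 'a::field poly"
  assumes K: "is_subfield K" and g: "\<forall>j. poly_over K (g j)"
    and v: "\<exists>j<N. v j \<noteq> 0" "(\<Sum>j<N. smult (v j) (g j)) = 0"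
  shows "\<exists>w. (\<forall>j. w j \<in> K) \<and> (\<exists>j<N. w j \<noteq> 0) \<and> (\<Sum>j<N. smult (w j) (g j)) = 0"
proof -
  have coeff_eq: "coeff (\<Sum>j<N. smult (u j) (g j)) e = (\<Sum>j<N. coeff (g j) e * u j)" for u e
    unfolding coeff_sum coeff_smult by (rule sum.cong) simp_all
  have coeffs_K: "\<forall>e j. coeff (g j) e \<in> K" using g unfolding poly_over_def by blast
  have "\<forall>e\<in>UNIV. (\<Sum>j<N. coeff (g j) e * v j) = 0"
    using v(2) coeff_eq[of v] by simp
  from subfield_linear_descent[OF K coeffs_K v(1) this]
  obtain w where w: "\<forall>j. w j \<in> K" "\<exists>j<N. w j \<noteq> 0"
    "\<forall>e\<in>UNIV. (\<Sum>j<N. coeff (g j) e * w j) = 0"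
    by blast
  have "(\<Sum>j<N. smult (w j) (g j)) = 0"
    using w(3) coeff_eq[of w] by (intro poly_eqI) simp
  with w(1,2) show ?thesis by blast
qed

lemma sum_image_mult_self:
  assumes "inj_on w I"
  shows "(\<Sum>b\<in>w ` I. a b * b) = (\<Sum>i\<in>I. a (w i) * w i)"
  by (rule sum.reindex_cong[OF assms]) auto

lemma lin_comb_image:
  assumes inj: "inj_on w I"
  shows "lin_comb F (w ` I) = {\<Sum>i\<in>I. a i * w i | a. \<forall>i\<in>I. a i \<in> F}"
proof (intro set_eqI iffI)
  note reindex = sum_image_mult_self[OF inj]
  fix l
  assume "l \<in> lin_comb F (w ` I)"
  then obtain a where "\<forall>b\<in>w ` I. a b \<in> F" "l = (\<Sum>b\<in>w ` I. a b * b)"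
    unfolding lin_comb_def by blast
  then show "l \<in> {\<Sum>i\<in>I. a i * w i | a. \<forall>i\<in>I. a i \<in> F}"
    unfolding reindex mem_Collect_eq by (intro exI[of _ "\<lambda>i. a (w i)"]) simp
next
  note reindex = sum_image_mult_self[OF inj]
  fix l
  assume "l \<in> {\<Sum>i\<in>I. a i * w i | a. \<forall>i\<in>I. a i \<in> F}"
  then obtain a where a: "\<forall>i\<in>I. a i \<in> F" "l = (\<Sum>i\<in>I. a i * w i)" by blast
  define a' where "a' b = a (the_inv_into I w b)" for b
  have "l = (\<Sum>b\<in>w ` I. a' b * b)"
    unfolding reindex a'_def a(2) using the_inv_into_f_f[OF inj] by simp
  moreover have "\<forall>b\<in>w ` I. a' b \<in> F"
    unfolding a'_def using a(1) the_inv_into_f_f[OF inj] by auto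
  ultimately show "l \<in> lin_comb F (w ` I)" unfolding lin_comb_def by blast
qed

lemma lin_indep_image:
  assumes "inj_on w I"
  shows "lin_indep F (w ` I) \<longleftrightarrow>
    (\<forall>a. (\<forall>i\<in>I. a i \<in> F) \<and> (\<Sum>i\<in>I. a i * w i) = 0 \<longrightarrow> (\<forall>i\<in>I. a i = 0))"
proof -
  note reindex = sum_image_mult_self[OF assms]
  show ?thesis
  proof
    assume indep: "lin_indep F (w ` I)"
    show "\<forall>a. (\<forall>i\<in>I. a i \<in> F) \<and> (\<Sum>i\<in>I. a i * w i) = 0 \<longrightarrow> (\<forall>i\<in>I. a i = 0)"
    proof (intro allI impI)
      fix a assume a: "(\<forall>i\<in>I. a i \<in> F) \<and> (\<Sum>i\<in>I. a i * w i) = 0"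
      define a' where "a' b = a (the_inv_into I w b)" for b
      have "\<forall>b\<in>w ` I. a' b \<in> F" "(\<Sum>b\<in>w ` I. a' b * b) = 0"
        using a the_inv_into_f_f[OF assms] unfolding a'_def reindex by auto
      then have "\<forall>b\<in>w ` I. a' b = 0" using indep unfolding lin_indep_def by blast
      then show "\<forall>i\<in>I. a i = 0" using the_inv_into_f_f[OF assms] unfolding a'_def by auto
    qed
  qed (auto simp: lin_indep_def reindex)
qed

section \<open>Separable polynomials and the separable closure\<close>

lemma alg_closed_root:
  fixes f :: "'a::field poly"
  assumes "alg_closed TYPE('a)" "degree f > 0"
  shows "\<exists>x. poly f x = 0"
  using assms unfolding alg_closed_def by blast

text \<open>Separability is tested on the roots in the algebraically closed ambient field.\<close>
definition separable_poly :: "'a::field poly \<Rightarrow> bool" where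
  "separable_poly f \<longleftrightarrow> f \<noteq> 0 \<and> (\<forall>y. poly f y = 0 \<longrightarrow> poly (pderiv f) y \<noteq> 0)"

lemma sep_closure_iff:
  "x \<in> sep_closure K \<longleftrightarrow> (\<exists>f. poly_over K f \<and> separable_poly f \<and> poly f x = 0)"
  unfolding sep_closure_def separable_poly_def by blast

lemma pderiv_linear_mult:
  fixes f :: "'a::field poly"
  shows "pderiv ([:-r, 1:] * f) = [:-r, 1:] * pderiv f + f"
proof -
  have "pderiv ([:-r, 1:] * f) = [:-r, 1:] * pderiv f + f * pderiv [:-r, 1:]"
    by (rule pderiv_mult)
  moreover have "pderiv [:-r, 1:] = 1" by (simp add: pderiv_pCons)
  ultimately show ?thesis by simp
qed

lemma degree_linear_mult:
  fixes f :: "'a::field poly"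
  assumes "f \<noteq> 0"
  shows "degree ([:-r, 1:] * f) = Suc (degree f)"
proof -
  have "degree ([:-r, 1:] * f) = degree [:-r, 1:] + degree f"
    by (rule degree_mult_eq) (use assms in auto)
  then show ?thesis by simp
qed

lemma separable_poly_linear_factor:
  assumes "separable_poly ([:-r, 1:] * f)"
  shows "separable_poly f" and "poly f r \<noteq> 0"
  using assms unfolding separable_poly_def pderiv_linear_mult by auto

lemma separable_poly_dvd:
  fixes f g :: "'a::field poly"
  assumes ac: "alg_closed TYPE('a)"
    and "separable_poly f" and "\<forall>y. poly f y = 0 \<longrightarrow> poly g y = 0"
  shows "f dvd g"
  using assms(2-)
proof (induction "degree f" arbitrary: f g rule: less_induct)
  case less
  have f0: "f \<noteq> 0" using less.prems(1) unfolding separable_poly_def by blast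
  show ?case
  proof (cases "degree f = 0")
    case True
    with f0 show ?thesis
      by (metis degree_eq_zeroE is_unit_const_poly_iff dvd_field_iff unit_imp_dvd pCons_eq_0_iff)
  next
    case False
    then obtain r where "poly f r = 0" using alg_closed_root[OF ac] by auto
    then obtain f1 g1 where f1: "f = [:-r, 1:] * f1" and g1: "g = [:-r, 1:] * g1"
      using less.prems(2) poly_eq_0_iff_dvd by (metis dvdE)
    note sep1 = separable_poly_linear_factor[OF less.prems(1)[unfolded f1]]
    have "f1 \<noteq> 0" using f0 f1 by auto
    then have "degree f1 < degree f" unfolding f1 degree_linear_mult[OF \<open>f1 \<noteq> 0\<close>] by simp
    moreover have "\<forall>y. poly f1 y = 0 \<longrightarrow> poly g1 y = 0"
      using less.prems(2) sep1(2) unfolding f1 g1 by fastforce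
    ultimately have "f1 dvd g1" using less.hyps sep1(1) by blast
    then show ?thesis unfolding f1 g1 by (rule mult_dvd_mono[OF dvd_refl])
  qed
qed

lemma separable_poly_if_card_roots:
  fixes P :: "'a::field poly"
  assumes P: "P \<noteq> 0" and V: "finite V" "degree P \<le> card V" "\<forall>v\<in>V. poly P v = 0"
  shows "separable_poly P"
  unfolding separable_poly_def
proof (intro conjI P allI impI notI)
  fix z assume z: "poly P z = 0" and dz: "poly (pderiv P) z = 0"
  obtain P1 where P1: "P = [:-z, 1:] * P1" using z poly_eq_0_iff_dvd by (metis dvdE)
  have P1nz: "P1 \<noteq> 0" using P P1 by auto
  have "poly P1 z = 0" using dz unfolding P1 pderiv_linear_mult by simp
  moreover have "poly P1 v = 0" if "v \<in> V" "v \<noteq> z" for v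
    using V(3) that P1 by auto
  ultimately have roots: "insert z V \<subseteq> {y. poly P1 y = 0}" by blast
  have "card V \<le> card (insert z V)" using V(1) by (simp add: card_insert_le)
  also have "\<dots> \<le> card {y. poly P1 y = 0}"
    using roots by (rule card_mono[OF poly_roots_finite[OF P1nz]])
  also have "\<dots> \<le> degree P1" by (rule card_poly_roots_bound[OF P1nz])
  also have "\<dots> < degree P" using P1 degree_linear_mult[OF P1nz] by simp
  finally show False using V(2) by simp
qed

lemma pcompose_power: "pcompose (p ^ n) h = pcompose p h ^ n"
  by (induction n) (simp_all add: pcompose_1 pcompose_mult)

lemma pcompose_sum_monom: "pcompose (\<Sum>j\<le>k. monom (u j) j) h = (\<Sum>j\<le>k. smult (u j) (h ^ j))"
  by (simp add: pcompose_sum pcompose_smult monom_altdef pcompose_power pcompose_pCons)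

lemma sum_lessThan_add:
  fixes n m :: nat shows "(\<Sum>j<n + m. g j) = (\<Sum>j<n. g j) + (\<Sum>i<m. g (n + i))"
  by (induction m) (simp_all add: add.assoc)

lemma sum_smult_powers_shifts:
  fixes f h :: "'a::field poly"
  shows "(\<Sum>j<Suc k + Suc D. smult (u j) (if j \<le> k then h ^ j else - (monom 1 (j - Suc k) * f)))
    = pcompose (\<Sum>j\<le>k. monom (u j) j) h - (\<Sum>i\<le>D. monom (u (Suc k + i)) i) * f"
  unfolding sum_lessThan_add pcompose_sum_monom
  by (simp add: lessThan_Suc_atMost sum_distrib_right smult_monom flip: sum_negf mult_smult_left)

text \<open>
  A relation \<open>Q(h) = G f\<close> is a linear dependence among \<open>1, h, \<dots>, h\<^sup>k\<close> and the shifts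
  \<open>X\<^sup>i f\<close>, which can be moved to coefficients in \<open>K\<close>.
\<close>
lemma poly_over_pcompose_descent:
  fixes f h Q :: "'a::field poly"
  assumes K: "is_subfield K" and f: "poly_over K f" "f \<noteq> 0" and h: "poly_over K h"
    and Q: "Q \<noteq> 0" "degree Q \<le> k" "f dvd pcompose Q h"
  shows "\<exists>P. poly_over K P \<and> P \<noteq> 0 \<and> degree P \<le> k \<and> f dvd pcompose P h"
proof -
  obtain G where G: "pcompose Q h = f * G" using Q(3) by blast
  define D where "D = degree G"
  define g where "g j = (if j \<le> k then h ^ j else - (monom 1 (j - Suc k) * f))" for j
  define low where "low u = (\<Sum>j\<le>k. monom (u j) j)" for u :: "nat \<Rightarrow> 'a"
  define high where "high u = (\<Sum>i\<le>D. monom (u (Suc k + i)) i)" for u :: "nat \<Rightarrow> 'a"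
  have relation: "(\<Sum>j<Suc k + Suc D. smult (u j) (g j)) = pcompose (low u) h - high u * f" for u
    unfolding g_def low_def high_def by (rule sum_smult_powers_shifts)
  have "\<forall>j. poly_over K (g j)"
    unfolding g_def using f(1) h
    by (simp add: poly_over_power poly_over_mult poly_over_monom poly_over_uminus K subfield_1)
  moreover obtain v where v: "\<exists>j<Suc k + Suc D. v j \<noteq> 0" "(\<Sum>j<Suc k + Suc D. smult (v j) (g j)) = 0"
  proof
    define v where "v j = (if j \<le> k then coeff Q j else coeff G (j - Suc k))" for j
    have "low v = (\<Sum>j\<le>k. monom (coeff Q j) j)"
      unfolding low_def v_def by (intro sum.cong) auto
    then have "low v = Q" using poly_as_sum_of_monoms'[OF Q(2)] by simp
    moreover have "high v = G"
      unfolding high_def v_def D_def by (simp add: poly_as_sum_of_monoms)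
    ultimately show "(\<Sum>j<Suc k + Suc D. smult (v j) (g j)) = 0"
      unfolding relation using G by (simp add: mult.commute)
    show "\<exists>j<Suc k + Suc D. v j \<noteq> 0" using Q(1,2) unfolding v_def
      by (intro exI[of _ "degree Q"]) auto
  qed
  ultimately obtain w where w: "\<forall>j. w j \<in> K" "\<exists>j<Suc k + Suc D. w j \<noteq> 0"
    "(\<Sum>j<Suc k + Suc D. smult (w j) (g j)) = 0"
    using poly_over_linear_descent[OF K] by blast
  have eq: "pcompose (low w) h = high w * f" using w(3) unfolding relation by simp
  have coeff_low: "coeff (low w) j = (if j \<le> k then w j else 0)" for j
    unfolding low_def coeff_sum coeff_monom by (cases "j \<le> k") auto
  have "low w \<noteq> 0"
  proof
    assume low0: "low w = 0"
    then have "high w = 0" using eq f(2) by simp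
    then have "w (Suc k + i) = 0" if "i \<le> D" for i
      using arg_cong[OF \<open>high w = 0\<close>, of "\<lambda>p. coeff p i"] that
      unfolding high_def coeff_sum coeff_monom by simp
    moreover have "w j = 0" if "j \<le> k" for j using coeff_low[of j] low0 that by simp
    moreover obtain j where j: "j < Suc k + Suc D" "w j \<noteq> 0" using w(2) by blast
    ultimately show False
      by (cases "j \<le> k") (metis le_add_diff_inverse not_less_eq_eq add_less_cancel_left less_Suc_eq_le)+
  qed
  moreover have "poly_over K (low w)"
    unfolding poly_over_def coeff_low using w(1) subfield_0[OF K] by simp
  moreover have "degree (low w) \<le> k"
    unfolding low_def by (intro degree_sum_le) (auto intro: order.trans[OF degree_monom_le])
  ultimately show ?thesis using eq by (metis dvd_triv_right)
qed

lemma sep_closure_poly: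
  fixes x :: "'a::field" and h :: "'a poly"
  assumes ac: "alg_closed TYPE('a)" and K: "is_subfield K"
    and x: "x \<in> sep_closure K" and h: "poly_over K h"
  shows "poly h x \<in> sep_closure K"
proof -
  obtain f where f: "poly_over K f" "separable_poly f" "poly f x = 0"
    using x unfolding sep_closure_iff by blast
  have f0: "f \<noteq> 0" using f(2) unfolding separable_poly_def by blast
  define V where "V = poly h ` {y. poly f y = 0}"
  have V: "finite V" unfolding V_def using poly_roots_finite[OF f0] by simp
  define Q where "Q = (\<Prod>v\<in>V. [:-v, 1:])"
  have "Q \<noteq> 0" "degree Q = card V" unfolding Q_def
    using V by (simp_all add: degree_prod_eq_sum_degree)
  moreover have "f dvd pcompose Q h"
    using V unfolding Q_def V_def
    by (intro separable_poly_dvd[OF ac f(2)]) (auto simp: poly_pcompose poly_prod)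
  ultimately obtain P where P: "poly_over K P" "P \<noteq> 0" "degree P \<le> card V" "f dvd pcompose P h"
    using poly_over_pcompose_descent[OF K f(1) f0 h] by (metis order_refl)
  have roots: "\<forall>v\<in>V. poly P v = 0"
    using P(4) unfolding V_def by (auto elim!: dvdE) (metis poly_pcompose poly_mult mult_zero_left)
  have "separable_poly P" by (rule separable_poly_if_card_roots[OF P(2) V P(3) roots])
  moreover have "poly P (poly h x) = 0" using roots f(3) unfolding V_def by auto
  ultimately show ?thesis using P(1) unfolding sep_closure_iff by blast
qed

lemma subfield_subset_sep_closure:
  assumes K: "is_subfield K" and a: "a \<in> K"
  shows "a \<in> sep_closure K"
proof -
  have "poly_over K [:-a, 1:]"
    using a by (simp add: poly_over_pCons poly_over_0[OF K] subfield_closed[OF K])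
  moreover have "separable_poly [:-a, 1:]"
    unfolding separable_poly_def by (simp add: pderiv_pCons)
  ultimately show ?thesis unfolding sep_closure_iff by (intro exI[of _ "[:-a, 1:]"]) simp
qed

lemma abs_galois_facts:
  assumes "\<sigma> \<in> abs_galois K"
  shows abs_galois_closed: "x \<in> sep_closure K \<Longrightarrow> \<sigma> x \<in> sep_closure K"
    and abs_galois_add: "x \<in> sep_closure K \<Longrightarrow> y \<in> sep_closure K \<Longrightarrow> \<sigma> (x + y) = \<sigma> x + \<sigma> y"
    and abs_galois_mult: "x \<in> sep_closure K \<Longrightarrow> y \<in> sep_closure K \<Longrightarrow> \<sigma> (x * y) = \<sigma> x * \<sigma> y"
    and abs_galois_fixes: "a \<in> K \<Longrightarrow> \<sigma> a = a"
  using assms unfolding abs_galois_def by (blast dest: bij_betwE)+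

lemma abs_galois_poly:
  fixes K :: "'a::field set"
  assumes ac: "alg_closed TYPE('a)" and K: "is_subfield K"
    and \<sigma>: "\<sigma> \<in> abs_galois K" and x: "x \<in> sep_closure K"
    and h: "poly_over K h"
  shows "\<sigma> (poly h x) = poly h (\<sigma> x)"
  using h
proof (induction h rule: pCons_induct)
  case 0
  then show ?case using abs_galois_fixes[OF \<sigma> subfield_0[OF K]] by simp
next
  case (pCons a h)
  have a: "a \<in> K" and h: "poly_over K h" using pCons.prems by (simp_all add: poly_over_pCons)
  have "poly_over K (pCons 0 h)" using h by (simp add: poly_over_pCons subfield_0[OF K])
  from sep_closure_poly[OF ac K x this] have "x * poly h x \<in> sep_closure K" by simp
  moreover have "poly h x \<in> sep_closure K" by (rule sep_closure_poly[OF ac K x h])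
  moreover have "a \<in> sep_closure K" by (rule subfield_subset_sep_closure[OF K a])
  ultimately have "\<sigma> (a + x * poly h x) = a + \<sigma> x * \<sigma> (poly h x)"
    using abs_galois_add[OF \<sigma>] abs_galois_mult[OF \<sigma> x] abs_galois_fixes[OF \<sigma> a] by simp
  then show ?case using pCons.IH[OF h] by simp
qed

section \<open>The finite field \<open>\<bbbF>\<^sub>q\<close>\<close>

locale finite_subfield =
  fixes Fq :: "'a::field set" and p q :: nat
  assumes prime_p: "prime p" and q_prime_power: "\<exists>n. q = p ^ n"
    and Fq: "is_subfield Fq" and finite_Fq: "finite Fq" and card_Fq: "card Fq = q"
begin

lemma q_ge_2: "q \<ge> 2"
proof -
  have "{0, 1} \<subseteq> Fq" using subfield_0[OF Fq] subfield_1[OF Fq] by auto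
  then have "card {0::'a, 1} \<le> card Fq" using finite_Fq by (rule card_mono[rotated])
  then show ?thesis using card_Fq by simp
qed

lemma q_pos: "q > 0" using q_ge_2 by simp

lemma q_eq_Suc: "q = Suc (q - 1)" using q_pos by simp

text \<open>The translation \<open>x \<mapsto> x + 1\<close> permutes \<open>\<bbbF>\<^sub>q\<close>, so summing over \<open>\<bbbF>\<^sub>q\<close> gives \<open>q \<cdot> 1 = 0\<close>.\<close>
lemma of_nat_q: "of_nat q = (0::'a)"
proof -
  have inj: "inj_on (\<lambda>x. x + 1) Fq" by (auto simp: inj_on_def)
  have "(\<lambda>x. x + 1) ` Fq \<subseteq> Fq" using subfield_add[OF Fq] subfield_1[OF Fq] by auto
  then have "(\<lambda>x. x + 1) ` Fq = Fq" by (rule endo_inj_surj[OF finite_Fq _ inj])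
  then have "(\<Sum>x\<in>Fq. x) = (\<Sum>x\<in>(\<lambda>x. x + 1) ` Fq. x)" by simp
  also have "\<dots> = (\<Sum>x\<in>Fq. x + 1)" by (rule sum.reindex[OF inj, unfolded comp_def])
  also have "\<dots> = (\<Sum>x\<in>Fq. x) + of_nat (card Fq)" by (simp add: sum.distrib)
  finally show ?thesis using card_Fq by simp
qed

lemma of_nat_p: "of_nat p = (0::'a)"
proof -
  obtain n where "q = p ^ n" using q_prime_power by blast
  then have "(of_nat p :: 'a) ^ n = 0" using of_nat_q by simp
  then show ?thesis by simp
qed

lemma add_power_q: "(x + y) ^ q = x ^ q + (y::'a) ^ q"
  using q_prime_power add_power_prime_power_eq[OF prime_p of_nat_p] by blast

lemma sum_power_q: "finite A \<Longrightarrow> (\<Sum>i\<in>A. g i) ^ q = (\<Sum>i\<in>A. (g i :: 'a) ^ q)"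
  by (rule power_sum_eq_sum_power[OF add_power_q q_pos])

text \<open>Multiplication by \<open>a \<noteq> 0\<close> permutes \<open>\<bbbF>\<^sub>q\<^sup>\<times>\<close>, so \<open>a\<^bsup>q-1\<^esup> = 1\<close>.\<close>
lemma power_q_minus_1_eq_1:
  assumes a: "a \<in> Fq" "a \<noteq> 0"
  shows "a ^ (q - 1) = 1"
proof -
  let ?F = "Fq - {0}"
  have fin: "finite ?F" using finite_Fq by simp
  have inj: "inj_on (\<lambda>x. a * x) ?F" using a by (auto simp: inj_on_def)
  have "(\<lambda>x. a * x) ` ?F \<subseteq> ?F" using subfield_mult[OF Fq] a by auto
  then have img: "(\<lambda>x. a * x) ` ?F = ?F" by (rule endo_inj_surj[OF fin _ inj])
  have "prod (\<lambda>x. x) ?F = prod (\<lambda>x. x) ((\<lambda>x. a * x) ` ?F)" using img by simp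
  also have "\<dots> = prod (\<lambda>x. a * x) ?F" by (rule prod.reindex[OF inj, unfolded comp_def])
  also have "\<dots> = a ^ card ?F * prod (\<lambda>x. x) ?F" by (simp add: prod.distrib)
  finally have "a ^ card ?F = 1" using fin by simp
  moreover have "card ?F = q - 1" using card_Fq subfield_0[OF Fq] finite_Fq by simp
  ultimately show ?thesis by simp
qed

lemma power_q_Fq:
  assumes "a \<in> Fq"
  shows "a ^ q = a"
proof (cases "a = 0")
  case False
  then show ?thesis using power_q_minus_1_eq_1[OF assms False] by (subst q_eq_Suc) simp
qed (simp add: q_pos)

text \<open>\<open>\<bbbF>\<^sub>q\<^sup>\<times>\<close> already supplies \<open>q - 1\<close> roots of \<open>X\<^bsup>q-1\<^esup> - 1\<close>, hence all of them.\<close>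
lemma root_of_unity_in_Fq:
  assumes z: "z ^ (q - 1) = (1::'a)"
  shows "z \<in> Fq"
proof -
  define Z where "Z = monom (1::'a) (q - 1) - 1"
  have "coeff Z (q - 1) = 1" unfolding Z_def using q_ge_2 by simp
  then have Z0: "Z \<noteq> 0" by auto
  have "degree Z \<le> q - 1" unfolding Z_def
    by (intro order.trans[OF degree_diff_le]) (auto intro: degree_monom_le)
  then have "card {y. poly Z y = 0} \<le> q - 1" using card_poly_roots_bound[OF Z0] by simp
  moreover have sub: "Fq - {0} \<subseteq> {y. poly Z y = 0}"
    using power_q_minus_1_eq_1 by (auto simp: Z_def poly_monom)
  moreover have "card (Fq - {0}) = q - 1" using card_Fq subfield_0[OF Fq] finite_Fq by simp
  ultimately have "Fq - {0} = {y. poly Z y = 0}"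
    using card_subset_eq[OF poly_roots_finite[OF Z0] sub] card_mono[OF poly_roots_finite[OF Z0] sub]
    by simp
  moreover have "poly Z z = 0" using z by (simp add: Z_def poly_monom)
  ultimately show ?thesis by blast
qed

lemma frobenius_kernel:
  assumes "c * \<nu> + \<nu> ^ q = 0" "\<mu> ^ (q - 1) = - c" "c \<noteq> 0"
  shows "\<exists>a\<in>Fq. \<nu> = a * \<mu>"
proof (cases "\<nu> = 0")
  case True then show ?thesis using subfield_0[OF Fq] by auto
next
  case False
  have "\<mu> \<noteq> 0" using assms(2,3) q_ge_2 by (auto simp: zero_power)
  have "\<nu> * (c + \<nu> ^ (q - 1)) = 0" using assms(1) by (subst (asm) q_eq_Suc) (simp add: algebra_simps)
  then have "\<nu> ^ (q - 1) = - c" using False by (simp add: eq_neg_iff_add_eq_0 add.commute)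
  then have "(\<nu> / \<mu>) ^ (q - 1) = 1" using assms(2,3) by (simp add: power_divide)
  then have "\<nu> / \<mu> \<in> Fq" by (rule root_of_unity_in_Fq)
  moreover have "\<nu> = (\<nu> / \<mu>) * \<mu>" using \<open>\<mu> \<noteq> 0\<close> by simp
  ultimately show ?thesis by blast
qed

end

lemma tcoeff_tau_plus: "tcoeff [a, 1] i = (if i = 0 then a else if i = 1 then 1 else 0)"
  unfolding tcoeff_def by (cases i) (auto simp: nth_Cons split: nat.splits)

lemma tmul_tau_plus_nth:
  assumes "k < Suc (length b)"
  shows "tmul q [a, 1] b ! k = a * tcoeff b k + (if 1 \<le> k then tcoeff b (k - 1) ^ q else 0)"
proof -
  have "tmul q [a, 1] b ! k = (\<Sum>i\<le>k. tcoeff [a, 1] i * tcoeff b (k - i) ^ (q ^ i))"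
    using assms unfolding tmul_def by (simp del: upt_Suc)
  also have "\<dots> = (\<Sum>i\<le>k. (if i = 0 then a * tcoeff b k else 0)
      + (if i = 1 then tcoeff b (k - 1) ^ q else 0))"
    by (intro sum.cong) (auto simp: tcoeff_tau_plus)
  also have "\<dots> = a * tcoeff b k + (if 1 \<le> k then tcoeff b (k - 1) ^ q else 0)"
    by (simp add: sum.distrib)
  finally show ?thesis .
qed

lemma teval_conv_tcoeff: "teval q b x = (\<Sum>k<length b. tcoeff b k * x ^ (q ^ k))"
  unfolding teval_def tcoeff_def by simp

context finite_subfield
begin

lemma teval_tmul_tau_plus:
  fixes x a :: 'a and b :: "'a list"
  shows "teval q (tmul q [a, 1] b) x = a * teval q b x + teval q b x ^ q"
proof -
  let ?n = "length b" and ?t = "tcoeff b"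
  have len: "length (tmul q [a, 1] b) = Suc ?n" unfolding tmul_def by simp
  have "teval q (tmul q [a, 1] b) x
      = (\<Sum>k<Suc ?n. (a * ?t k + (if 1 \<le> k then ?t (k - 1) ^ q else 0)) * x ^ (q ^ k))"
    unfolding teval_def len by (intro sum.cong) (simp_all add: tmul_tau_plus_nth)
  also have "\<dots> = a * (\<Sum>k<Suc ?n. ?t k * x ^ (q ^ k))
      + (\<Sum>k<Suc ?n. (if 1 \<le> k then ?t (k - 1) ^ q else 0) * x ^ (q ^ k))"
    by (simp add: algebra_simps sum.distrib sum_distrib_left)
  also have "(\<Sum>k<Suc ?n. ?t k * x ^ (q ^ k)) = teval q b x"
    unfolding teval_conv_tcoeff by (simp add: tcoeff_def)
  also have "(\<Sum>k<Suc ?n. (if 1 \<le> k then ?t (k - 1) ^ q else 0) * x ^ (q ^ k))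
      = (\<Sum>k<?n. (?t k * x ^ (q ^ k)) ^ q)"
    by (subst sum.lessThan_Suc_shift)
      (simp add: power_mult_distrib power_mult[symmetric] mult.commute)
  also have "\<dots> = teval q b x ^ q"
    unfolding teval_conv_tcoeff by (simp add: sum_power_q)
  finally show ?thesis .
qed

end

(* Within the flag locale the recursion is used through f_0 and f_Suc instead. *)
declare fpoly.simps [simp del]

fun fpoly_poly :: "nat \<Rightarrow> (nat \<Rightarrow> 'a::field) \<Rightarrow> nat \<Rightarrow> 'a poly" where
  "fpoly_poly q c 0 = [:0, 1:]"
| "fpoly_poly q c (Suc s) = fpoly_poly q c s ^ q + smult (c (Suc s)) (fpoly_poly q c s)"

section \<open>The flag of root spaces\<close>

locale kummer_flag = finite_subfield Fq p q for Fq :: "'a::field set" and p q +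
  fixes K :: "'a set" and r :: nat and c :: "nat \<Rightarrow> 'a"
  assumes alg_closed: "alg_closed TYPE('a)" and K: "is_subfield K" and Fq_subset_K: "Fq \<subseteq> K"
    and c: "\<forall>i\<in>{1..r}. c i \<in> K \<and> c i \<noteq> 0"
begin

abbreviation f :: "nat \<Rightarrow> 'a \<Rightarrow> 'a" where "f s x \<equiv> teval q (fpoly q c s) x"

abbreviation W :: "nat \<Rightarrow> 'a set" where "W s \<equiv> Wsp q K c s"

lemma c_in_K: "i \<in> {1..r} \<Longrightarrow> c i \<in> K" and c_nonzero: "i \<in> {1..r} \<Longrightarrow> c i \<noteq> 0"
  using c by auto

lemma f_0 [simp]: "f 0 x = x"
  by (simp add: teval_def fpoly.simps)

lemma f_Suc [simp]: "f (Suc s) x = c (Suc s) * f s x + f s x ^ q"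
  by (simp add: teval_tmul_tau_plus fpoly.simps)

lemma poly_fpoly_poly: "poly (fpoly_poly q c s) x = f s x"
  by (induction s) (simp_all add: add.commute)

lemma poly_over_fpoly_poly: "s \<le> r \<Longrightarrow> poly_over K (fpoly_poly q c s)"
proof (induction s)
  case 0
  then show ?case by (simp add: poly_over_pCons poly_over_0[OF K] subfield_closed[OF K])
next
  case (Suc s)
  then show ?case
    by (simp add: poly_over_add[OF K] poly_over_smult[OF K] poly_over_power[OF K] c_in_K)
qed

lemma degree_fpoly_poly: "degree (fpoly_poly q c s) = q ^ s"
proof (induction s)
  case (Suc s)
  let ?P = "fpoly_poly q c s"
  have pos: "degree ?P > 0" using Suc q_pos by simp
  then have power: "degree (?P ^ q) = q * degree ?P" by (intro degree_power_eq) auto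
  have "degree (smult (c (Suc s)) ?P) \<le> degree ?P" by (rule degree_smult_le)
  also have "\<dots> < q * degree ?P" using pos q_ge_2 by simp
  finally have "degree (fpoly_poly q c (Suc s)) = q * degree ?P"
    using power by (simp add: degree_add_eq_left)
  then show ?case using Suc by simp
qed simp

text \<open>In characteristic \<open>p\<close>, \<open>pderiv f\<^sub>s\<close> is the constant \<open>c\<^sub>s \<cdots> c\<^sub>1\<close>.\<close>
lemma poly_pderiv_fpoly_poly_nonzero: "s \<le> r \<Longrightarrow> poly (pderiv (fpoly_poly q c s)) y \<noteq> 0"
proof (induction s)
  case (Suc s)
  let ?P = "fpoly_poly q c s"
  have "pderiv (?P ^ q) = 0"
    using pderiv_power_Suc[of ?P "q - 1", folded q_eq_Suc] of_nat_q by simp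
  then have "pderiv (fpoly_poly q c (Suc s)) = smult (c (Suc s)) (pderiv ?P)"
    by (simp add: pderiv_add pderiv_smult)
  moreover have "c (Suc s) \<noteq> 0" using Suc.prems c_nonzero by simp
  ultimately show ?case using Suc by simp
qed (simp add: pderiv_pCons)

lemma separable_fpoly_poly: "s \<le> r \<Longrightarrow> separable_poly (fpoly_poly q c s)"
  unfolding separable_poly_def using poly_pderiv_fpoly_poly_nonzero degree_fpoly_poly[of s] q_pos
  by (metis degree_0 power_not_zero neq0_conv)

lemma f_root_in_sep_closure: "s \<le> r \<Longrightarrow> f s x = 0 \<Longrightarrow> x \<in> sep_closure K"
  unfolding sep_closure_iff
  by (intro exI[of _ "fpoly_poly q c s"])
    (simp add: poly_over_fpoly_poly separable_fpoly_poly poly_fpoly_poly)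

lemma W_eq: "s \<le> r \<Longrightarrow> W s = {x. f s x = 0}"
  unfolding Wsp_def using f_root_in_sep_closure by blast

lemma f_add: "f s (x + y) = f s x + f s y"
  by (induction s) (simp_all add: add_power_q distrib_left)

lemma f_smult: "a \<in> Fq \<Longrightarrow> f s (a * x) = a * f s x"
  by (induction s) (simp_all add: power_q_Fq power_mult_distrib distrib_left mult.left_commute)

lemma f_zero: "f s 0 = 0"
  using f_smult[OF subfield_0[OF Fq], of s 0] by simp

lemma f_diff: "f s (x - y) = f s x - f s y"
  using f_add[of s "x - y" y] by (simp add: algebra_simps)

lemma f_sum: "\<forall>i\<in>A. a i \<in> Fq \<Longrightarrow> f s (\<Sum>i\<in>A. a i * v i) = (\<Sum>i\<in>A. a i * f s (v i))"
  by (induction A rule: infinite_finite_induct) (simp_all add: f_zero f_add f_smult)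

lemma f_eq_0_mono: "f s x = 0 \<Longrightarrow> s \<le> t \<Longrightarrow> f t x = 0"
  by (induction t) (auto simp: zero_power q_pos le_Suc_eq)

lemma f_galois:
  assumes "s \<le> r" "\<sigma> \<in> abs_galois K" "x \<in> sep_closure K"
  shows "f s (\<sigma> x) = \<sigma> (f s x)"
  using abs_galois_poly[OF alg_closed K assms(2,3) poly_over_fpoly_poly[OF assms(1)]]
  by (simp add: poly_fpoly_poly)

definition mu :: "nat \<Rightarrow> 'a" where "mu j = (SOME m. m ^ (q - 1) = - c j)"

definition w :: "nat \<Rightarrow> 'a" where "w j = (SOME x. f (j - 1) x = mu j)"

lemma mu_power: "mu j ^ (q - 1) = - c j"
proof -
  define Z where "Z = monom (1::'a) (q - 1) + [:c j:]"
  have "degree Z = q - 1" "q - 1 > 0"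
    using q_ge_2 unfolding Z_def by (simp_all add: degree_add_eq_left degree_monom_eq)
  then obtain y where "poly Z y = 0" using alg_closed_root[OF alg_closed, of Z] by auto
  then have "y ^ (q - 1) = - c j" unfolding Z_def by (simp add: poly_monom eq_neg_iff_add_eq_0)
  then show ?thesis unfolding mu_def by (rule someI)
qed

lemma mu_nonzero: "j \<in> {1..r} \<Longrightarrow> mu j \<noteq> 0"
  using mu_power[of j] c_nonzero[of j] q_ge_2 by (auto simp: zero_power)

lemma mu_root: "c j * mu j + mu j ^ q = 0"
  using mu_power[of j] by (subst q_eq_Suc) (simp add: algebra_simps)

lemma f_pred_w: "f (j - 1) (w j) = mu j"
proof -
  define Z where "Z = fpoly_poly q c (j - 1) - [:mu j:]"
  have "degree (fpoly_poly q c (j - 1)) > 0" using degree_fpoly_poly q_pos by simp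
  moreover from this have "degree Z = degree (fpoly_poly q c (j - 1))" unfolding Z_def
    by (simp add: degree_add_eq_left diff_conv_add_uminus)
  ultimately obtain y where "poly Z y = 0" using alg_closed_root[OF alg_closed, of Z] by auto
  then have "f (j - 1) y = mu j" unfolding Z_def by (simp add: poly_fpoly_poly)
  then show ?thesis unfolding w_def by (rule someI)
qed

lemma f_w:
  assumes "1 \<le> j" "j \<le> s"
  shows "f s (w j) = 0"
proof (rule f_eq_0_mono[OF _ assms(2)])
  have "f (Suc (j - 1)) (w j) = c (Suc (j - 1)) * mu j + mu j ^ q"
    using f_pred_w[of j] by (simp only: f_Suc)
  then show "f j (w j) = 0" using assms(1) mu_root[of j] by simp
qed

lemma f_Suc_eq_0_imp:
  assumes "Suc s \<le> r" "f (Suc s) x = 0"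
  shows "\<exists>b\<in>Fq. f s x = b * mu (Suc s)"
proof -
  have "c (Suc s) * f s x + f s x ^ q = 0" using assms(2) by simp
  moreover have "c (Suc s) \<noteq> 0" using assms(1) c_nonzero by simp
  ultimately show ?thesis by (rule frobenius_kernel[OF _ mu_power])
qed

lemma f_eq_0_imp_span:
  "s \<le> r \<Longrightarrow> f s x = 0 \<Longrightarrow> \<exists>a. (\<forall>i. a i \<in> Fq) \<and> x = (\<Sum>i=1..s. a i * w i)"
proof (induction s arbitrary: x)
  case 0
  then show ?case using subfield_0[OF Fq] by (intro exI[of _ "\<lambda>_. 0"]) simp
next
  case (Suc s)
  obtain b where b: "b \<in> Fq" "f s x = b * mu (Suc s)"
    using f_Suc_eq_0_imp[OF Suc.prems] by blast
  have "f s (x - b * w (Suc s)) = 0"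
    using b f_pred_w[of "Suc s"] by (simp add: f_diff f_smult)
  moreover have "s \<le> r" using Suc.prems(1) by simp
  ultimately obtain a where a: "\<forall>i. a i \<in> Fq" "x - b * w (Suc s) = (\<Sum>i=1..s. a i * w i)"
    using Suc.IH by blast
  have "(\<Sum>i=1..s. a i * w i) = (\<Sum>i=1..s. (a(Suc s := b)) i * w i)"
    by (intro sum.cong) auto
  then have "x = (\<Sum>i=1..Suc s. (a(Suc s := b)) i * w i)" using a(2) by (simp add: algebra_simps)
  then show ?case using a(1) b(1) by (intro exI[of _ "a(Suc s := b)"]) simp
qed

lemma w_lin_indep:
  "s \<le> r \<Longrightarrow> \<forall>i\<in>{1..s}. a i \<in> Fq \<Longrightarrow> (\<Sum>i=1..s. a i * w i) = 0 \<Longrightarrow> \<forall>i\<in>{1..s}. a i = 0"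
proof (induction s)
  case (Suc s)
  have "f s (\<Sum>i=1..Suc s. a i * w i) = (\<Sum>i=1..Suc s. a i * f s (w i))"
    using Suc.prems(2) by (rule f_sum)
  also have "\<dots> = (\<Sum>i=1..s. a i * f s (w i)) + a (Suc s) * mu (Suc s)"
    using f_pred_w[of "Suc s"] by simp
  also have "(\<Sum>i=1..s. a i * f s (w i)) = 0"
    by (rule sum.neutral) (simp add: f_w)
  finally have top: "a (Suc s) = 0"
    using Suc.prems(1,3) mu_nonzero[of "Suc s"] by (simp add: f_zero)
  have "s \<le> r" "\<forall>i\<in>{1..s}. a i \<in> Fq" using Suc.prems(1,2) by auto
  moreover have "(\<Sum>i=1..s. a i * w i) = 0" using Suc.prems(3) top by simp
  ultimately have "\<forall>i\<in>{1..s}. a i = 0" by (rule Suc.IH)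
  with top show ?case by (simp add: atLeastAtMostSuc_conv)
qed simp

lemma inj_on_w: "inj_on w {1..r}"
proof (rule linorder_inj_onI)
  fix i j assume ij: "i < j" "i \<in> {1..r}" "j \<in> {1..r}"
  then have "f (j - 1) (w i) = 0" by (intro f_w) auto
  moreover have "f (j - 1) (w j) \<noteq> 0" using f_pred_w[of j] mu_nonzero[OF ij(3)] by simp
  ultimately show "w i \<noteq> w j" by auto
qed auto

lemma is_basis_W:
  assumes s: "s \<le> r"
  shows "is_basis Fq (W s) (w ` {1..s})"
proof -
  have inj: "inj_on w {1..s}" using inj_on_subset[OF inj_on_w] s by auto
  have "W s = {\<Sum>i=1..s. a i * w i | a. \<forall>i\<in>{1..s}. a i \<in> Fq}"
  proof
    show "W s \<subseteq> {\<Sum>i=1..s. a i * w i | a. \<forall>i\<in>{1..s}. a i \<in> Fq}"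
      using f_eq_0_imp_span[OF s] unfolding W_eq[OF s] by blast
    show "{\<Sum>i=1..s. a i * w i | a. \<forall>i\<in>{1..s}. a i \<in> Fq} \<subseteq> W s"
      unfolding W_eq[OF s] by (auto simp: f_sum f_w)
  qed
  moreover have "w ` {1..s} \<subseteq> W s" using W_eq[OF s] f_w by auto
  ultimately show ?thesis
    unfolding is_basis_def lin_comb_image[OF inj] lin_indep_image[OF inj]
    using w_lin_indep[OF s] by blast
qed

lemma W_0: "W 0 = {0}"
  using W_eq[of 0] by simp

lemma W_strict_mono:
  assumes s: "s \<in> {1..r}"
  shows "W (s - 1) \<subset> W s"
proof -
  have "W (s - 1) = {x. f (s - 1) x = 0}" "W s = {x. f s x = 0}" using s W_eq by auto
  moreover have "f (s - 1) x = 0 \<Longrightarrow> f s x = 0" for x by (rule f_eq_0_mono) auto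
  moreover have "f s (w s) = 0" "f (s - 1) (w s) \<noteq> 0"
    using s f_w[of s s] f_pred_w[of s] mu_nonzero[OF s] by auto
  ultimately show ?thesis by blast
qed

lemma is_subspace_W: "s \<le> r \<Longrightarrow> is_subspace Fq (W s)"
  unfolding is_subspace_def using W_eq[of s] by (simp add: f_zero f_add f_smult)

lemma W_galois_stable:
  assumes "s \<le> r" "\<sigma> \<in> abs_galois K"
  shows "\<sigma> ` W s \<subseteq> W s"
  using f_galois[OF assms] abs_galois_closed[OF assms(2)] abs_galois_fixes[OF assms(2) subfield_0[OF K]]
  unfolding Wsp_def by auto

lemma has_dim_W: "s \<le> r \<Longrightarrow> has_dim Fq (W s) s"
  unfolding has_dim_def using is_basis_W inj_on_subset[OF inj_on_w]
  by (intro exI[of _ "w ` {1..s}"]) (auto simp: card_image)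

section \<open>The Galois action\<close>

lemma w_in_sep_closure: "j \<in> {1..r} \<Longrightarrow> w j \<in> sep_closure K"
  using f_root_in_sep_closure[OF _ f_w[of j j]] by auto

lemma mu_in_sep_closure:
  assumes "j \<in> {1..r}"
  shows "mu j \<in> sep_closure K"
proof -
  have "mu j = poly (fpoly_poly q c (j - 1)) (w j)"
    using f_pred_w[of j] by (simp add: poly_fpoly_poly)
  moreover have "j - 1 \<le> r" using assms by auto
  ultimately show ?thesis
    using sep_closure_poly[OF alg_closed K w_in_sep_closure[OF assms] poly_over_fpoly_poly] by simp
qed

text \<open>
  \<open>\<sigma>(\<mu>)/\<mu>\<close> does not depend on the root \<open>\<mu>\<close> of \<open>X\<^bsup>q-1\<^esup> + c\<^sub>j\<close>, since any two roots
  differ by a factor in \<open>\<bbbF>\<^sub>q\<close>.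
\<close>
lemma kummer_eq:
  assumes \<sigma>: "\<sigma> \<in> abs_galois K" and j: "j \<in> {1..r}"
  shows "kummer q K (- c j) \<sigma> = \<sigma> (mu j) / mu j"
proof -
  define l where "l = (SOME l. l \<in> sep_closure K \<and> l ^ (q - 1) = - c j)"
  have "l \<in> sep_closure K \<and> l ^ (q - 1) = - c j"
    unfolding l_def by (rule someI[of _ "mu j"]) (intro conjI mu_in_sep_closure[OF j] mu_power)
  then have l: "l \<in> sep_closure K" "l ^ (q - 1) = - c j" by simp_all
  then have "c j * l + l ^ q = 0" by (subst q_eq_Suc) (simp add: algebra_simps)
  then obtain z where z: "z \<in> Fq" "l = z * mu j"
    using frobenius_kernel[OF _ mu_power c_nonzero[OF j]] by blast
  have "l \<noteq> 0" using l(2) c_nonzero[OF j] q_ge_2 by (auto simp: zero_power)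
  then have "z \<noteq> 0" using z by auto
  have zK: "z \<in> K" using z(1) Fq_subset_K by blast
  have "\<sigma> l = z * \<sigma> (mu j)"
    using abs_galois_mult[OF \<sigma> subfield_subset_sep_closure[OF K zK] mu_in_sep_closure[OF j]]
      abs_galois_fixes[OF \<sigma> zK] z(2) by simp
  then show ?thesis unfolding kummer_def l_def[symmetric] Let_def using z(2) \<open>z \<noteq> 0\<close> by simp
qed

lemma galois_mu_ratio_in_Fq:
  assumes \<sigma>: "\<sigma> \<in> abs_galois K" and j: "j \<in> {1..r}"
  shows "\<sigma> (mu j) / mu j \<in> Fq"
proof (rule root_of_unity_in_Fq)
  have "poly_over K (monom 1 (q - 1))" by (rule poly_over_monom[OF K subfield_1[OF K]])
  from abs_galois_poly[OF alg_closed K \<sigma> mu_in_sep_closure[OF j] this]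
  have "\<sigma> (mu j ^ (q - 1)) = \<sigma> (mu j) ^ (q - 1)" by (simp add: poly_monom)
  then have "\<sigma> (mu j) ^ (q - 1) = - c j"
    using mu_power[of j] abs_galois_fixes[OF \<sigma> subfield_uminus[OF K c_in_K[OF j]]] by simp
  then show "(\<sigma> (mu j) / mu j) ^ (q - 1) = 1"
    using mu_power[of j] c_nonzero[OF j] by (simp add: power_divide)
qed

lemma galois_w_triangular:
  assumes \<sigma>: "\<sigma> \<in> abs_galois K" and j: "j \<in> {1..r}"
  shows "\<exists>a. (\<forall>i. a i \<in> Fq) \<and> \<sigma> (w j) = (\<Sum>i=1..j. a i * w i) \<and> a j = kummer q K (- c j) \<sigma>"
proof -
  define \<kappa> where "\<kappa> = \<sigma> (mu j) / mu j"
  have \<kappa>: "\<kappa> \<in> Fq" unfolding \<kappa>_def by (rule galois_mu_ratio_in_Fq[OF \<sigma> j])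
  have jr: "j - 1 \<le> r" using j by auto
  from f_galois[OF jr \<sigma> w_in_sep_closure[OF j]]
  have "f (j - 1) (\<sigma> (w j)) = \<sigma> (mu j)" by (simp only: f_pred_w)
  then have "f (j - 1) (\<sigma> (w j) - \<kappa> * w j) = \<sigma> (mu j) - \<kappa> * mu j"
    using f_pred_w[of j] by (simp add: f_diff f_smult[OF \<kappa>])
  also have "\<dots> = 0" unfolding \<kappa>_def using mu_nonzero[OF j] by simp
  finally have "f (j - 1) (\<sigma> (w j) - \<kappa> * w j) = 0" .
  then obtain a where a: "\<forall>i. a i \<in> Fq" "\<sigma> (w j) - \<kappa> * w j = (\<Sum>i=1..j - 1. a i * w i)"
    using f_eq_0_imp_span[OF jr] by blast
  obtain j' where j': "j = Suc j'" using j by (cases j) auto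
  have "(\<Sum>i=1..j'. a i * w i) = (\<Sum>i=1..j'. (a(j := \<kappa>)) i * w i)"
    unfolding j' by (intro sum.cong) auto
  then have "\<sigma> (w j) = (\<Sum>i=1..j. (a(j := \<kappa>)) i * w i)"
    using a(2) unfolding j' by (simp add: algebra_simps)
  then show ?thesis using a(1) \<kappa> kummer_eq[OF \<sigma> j]
    by (intro exI[of _ "a(j := \<kappa>)"]) (simp add: \<kappa>_def)
qed

end

theorem lemma5p13:
  fixes Fq K :: "'a::field set" and t :: 'a and p q r :: nat and c :: "nat \<Rightarrow> 'a"
  assumes "alg_closed TYPE('a)"
    and "prime p" and "\<exists>n. q = p ^ n"
    and "is_subfield Fq" and "finite Fq" and "card Fq = q"
    and "t \<in> K" and "transcendental_over Fq t"
    and "is_subfield K" and "Fq \<subseteq> K" and "rat_fun_field Fq t \<subseteq> K"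
    and "finite_ext (rat_fun_field Fq t) K"
    and "\<forall>i\<in>{1..r}. c i \<in> K \<and> c i \<noteq> 0"
  shows "Wsp q K c 0 = {0}
    \<and> (\<forall>s\<in>{1..r}. Wsp q K c (s - 1) \<subset> Wsp q K c s)
    \<and> (\<forall>s\<le>r. is_subspace Fq (Wsp q K c s)
              \<and> (\<forall>\<sigma>\<in>abs_galois K. \<sigma> ` Wsp q K c s \<subseteq> Wsp q K c s)
              \<and> has_dim Fq (Wsp q K c s) s)
    \<and> (\<exists>w :: nat \<Rightarrow> 'a. inj_on w {1..r} \<and> is_basis Fq (Wsp q K c r) (w ` {1..r})
         \<and> (\<forall>\<sigma>\<in>abs_galois K. \<forall>j\<in>{1..r}. \<exists>a :: nat \<Rightarrow> 'a. (\<forall>i. a i \<in> Fq)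
               \<and> \<sigma> (w j) = (\<Sum>i=1..j. a i * w i)
               \<and> a j = kummer q K (- c j) \<sigma>))"
proof -
  interpret kummer_flag Fq p q K r c
    by unfold_locales (use assms in auto)
  show ?thesis
    using W_0 W_strict_mono is_subspace_W W_galois_stable has_dim_W
      inj_on_w is_basis_W[of r] galois_w_triangular by blast
qed

end
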